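(* Let $G=(V,E)$ be a finite graph satisfying the $CD\psi(n,-K)$ condition for some $n>0$, $K>0$, where $\psi:(0,+\infty)\to\mathbb R$ is a $C^1$ concave function. Let $u$ be a positive solution of the heat equation $\partial_t u=\Delta u$ on $V$ and fix $0<\alpha<1$. Then for all vertices and all $t>0$, $$(1-\alpha)\Gamma^{\psi}(u)-\psi'(1)\frac{\partial_{t}u}{u}\leq \frac{n}{2(1-\alpha)t}+\frac{Kn}{\alpha}.$$
   Context: Graphs: $G=(V,E)$ is a connected, locally finite graph; each edge $xy$ carries a weight $w_{xy}>0$ (possibly asymmetric), and $\mu:V\to(0,\infty)$ is a vertex measure; $y\sim x$ means $xy\in E$. Laplacian: $\Delta f(x)=\frac{1}{\mu(x)}\sum_{y\sim x}w_{xy}(f(y)-f(x))$. For $\psi:(0,\infty)\to\mathbb R$ and $f:V\to(0,\infty)$: the $\psi$-Laplacian is $\Delta^\psi f(x)=\Delta\big[\psi\big(\tfrac{f}{f(x)}\big)\big](x)$ (the Laplacian at $x$ of the function $y\mapsto\psi(f(y)/f(x))$); for $C^1$ $\psi$, $\overline\psi(s)=\psi'(1)(s-1)-(\psi(s)-\psi(1))$ and the $\psi$-gradient is $\Gamma^\psi f=\Delta^{\overline\psi}f$; $(\Omega^\psi f)(x)=\Delta\big[\psi'\big(\tfrac{f}{f(x)}\big)\tfrac{f}{f(x)}\big(\tfrac{\Delta f}{f}-\tfrac{\Delta f(x)}{f(x)}\big)\big](x)$; and the second $\psi$-gradient is given by $2\Gamma_2^\psi(f)=\Omega^\psi f+\frac{\Delta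 f\,\Delta^\psi f}{f}-\frac{\Delta(f\Delta^\psi f)}{f}$. The graph satisfies $CD\psi(n,K)$ if for every $f:V\to(0,\infty)$ and every vertex, $\Gamma_2^\psi(f)\ge\frac1n(\Delta^\psi f)^2+K\Gamma^\psi(f)$. A positive solution of the heat equation on $U\subset V$ is $u:V\times[0,\infty)\to(0,\infty)$, continuously differentiable in $t$, with $\partial_t u=\Delta u$ at every $x\in U$, $t\ge0$; operators are applied to $u(\cdot,t)$ at each fixed time. *)

theory Defs
  imports "HOL-Analysis.Analysis"
begin

definition lap :: "('v \<Rightarrow> 'v \<Rightarrow> bool) \<Rightarrow> ('v \<Rightarrow> 'v \<Rightarrow> real) \<Rightarrow> ('v \<Rightarrow> real)
    \<Rightarrow> ('v \<Rightarrow> real) \<Rightarrow> 'v \<Rightarrow> real" where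
  "lap E w mu f x = (1 / mu x) * (\<Sum>y\<in>{y. E x y}. w x y * (f y - f x))"

definition psi_lap :: "('v \<Rightarrow> 'v \<Rightarrow> bool) \<Rightarrow> ('v \<Rightarrow> 'v \<Rightarrow> real) \<Rightarrow> ('v \<Rightarrow> real)
    \<Rightarrow> (real \<Rightarrow> real) \<Rightarrow> ('v \<Rightarrow> real) \<Rightarrow> 'v \<Rightarrow> real" where
  "psi_lap E w mu psi f x = lap E w mu (\<lambda>y. psi (f y / f x)) x"

definition psi_bar :: "(real \<Rightarrow> real) \<Rightarrow> real \<Rightarrow> real" where
  "psi_bar psi s = deriv psi 1 * (s - 1) - (psi s - psi 1)"

definition psi_Gamma :: "('v \<Rightarrow> 'v \<Rightarrow> bool) \<Rightarrow> ('v \<Rightarrow> 'v \<Rightarrow> real) \<Rightarrow> ('v \<Rightarrow> real)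
    \<Rightarrow> (real \<Rightarrow> real) \<Rightarrow> ('v \<Rightarrow> real) \<Rightarrow> 'v \<Rightarrow> real" where
  "psi_Gamma E w mu psi f x = psi_lap E w mu (psi_bar psi) f x"

definition psi_Omega :: "('v \<Rightarrow> 'v \<Rightarrow> bool) \<Rightarrow> ('v \<Rightarrow> 'v \<Rightarrow> real) \<Rightarrow> ('v \<Rightarrow> real)
    \<Rightarrow> (real \<Rightarrow> real) \<Rightarrow> ('v \<Rightarrow> real) \<Rightarrow> 'v \<Rightarrow> real" where
  "psi_Omega E w mu psi f x =
     lap E w mu (\<lambda>y. deriv psi (f y / f x) * (f y / f x) *
        (lap E w mu f y / f y - lap E w mu f x / f x)) x"

definition psi_Gamma2 :: "('v \<Rightarrow> 'v \<Rightarrow> bool) \<Rightarrow> ('v \<Rightarrow> 'v \<Rightarrow> real) \<Rightarrow> ('v \<Rightarrow> real)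
    \<Rightarrow> (real \<Rightarrow> real) \<Rightarrow> ('v \<Rightarrow> real) \<Rightarrow> 'v \<Rightarrow> real" where
  "psi_Gamma2 E w mu psi f x =
     (psi_Omega E w mu psi f x
      + lap E w mu f x * psi_lap E w mu psi f x / f x
      - lap E w mu (\<lambda>y. f y * psi_lap E w mu psi f y) x / f x) / 2"

definition CD_psi :: "('v \<Rightarrow> 'v \<Rightarrow> bool) \<Rightarrow> ('v \<Rightarrow> 'v \<Rightarrow> real) \<Rightarrow> ('v \<Rightarrow> real)
    \<Rightarrow> (real \<Rightarrow> real) \<Rightarrow> real \<Rightarrow> real \<Rightarrow> bool" where
  "CD_psi E w mu psi n K \<longleftrightarrow>
     (\<forall>f x. (\<forall>y. f y > 0) \<longrightarrow>
        psi_Gamma2 E w mu psi f x \<ge> (1 / n) * (psi_lap E w mu psi f x)\<^sup>2 + K * psi_Gamma E w mu psi f x)"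

definition weighted_graph :: "('v \<Rightarrow> 'v \<Rightarrow> bool) \<Rightarrow> ('v \<Rightarrow> 'v \<Rightarrow> real) \<Rightarrow> ('v \<Rightarrow> real) \<Rightarrow> bool" where
  "weighted_graph E w mu \<longleftrightarrow>
     (\<forall>x y. E x y \<longleftrightarrow> E y x) \<and>
     (\<forall>x. finite {y. E x y}) \<and>
     (\<forall>x y. E x y \<longrightarrow> w x y > 0) \<and>
     (\<forall>x. mu x > 0) \<and>
     (\<forall>x y. E\<^sup>*\<^sup>* x y)"

definition pos_heat_solution :: "('v \<Rightarrow> 'v \<Rightarrow> bool) \<Rightarrow> ('v \<Rightarrow> 'v \<Rightarrow> real) \<Rightarrow> ('v \<Rightarrow> real)
    \<Rightarrow> 'v set \<Rightarrow> ('v \<Rightarrow> real \<Rightarrow> real) \<Rightarrow> bool" where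
  "pos_heat_solution E w mu U u \<longleftrightarrow>
     (\<forall>x t. t \<ge> 0 \<longrightarrow> u x t > 0) \<and>
     (\<forall>x. (\<forall>t\<ge>0. (u x) differentiable (at t within {0..})) \<and>
          continuous_on {0..} (\<lambda>t. vector_derivative (u x) (at t within {0..}))) \<and>
     (\<forall>x\<in>U. \<forall>t\<ge>0. (u x has_real_derivative lap E w mu (\<lambda>y. u y t) x) (at t within {0..}))"

end

theory Submission
  imports Defs
begin

text \<open>Let \<open>H = (1-\<alpha>)\<Gamma>\<^sup>\<psi>(u) - \<psi>'(1) \<partial>\<^sub>tu/u\<close>; since \<open>\<Gamma>\<^sup>\<psi>f = \<psi>'(1) \<Delta>f/f - \<Delta>\<^sup>\<psi>f\<close>, along the heat flow
  \<open>H = -\<Delta>\<^sup>\<psi>u - \<alpha>\<Gamma>\<^sup>\<psi>u\<close>. Maximise \<open>t H\<close> over \<open>V \<times> [0,T]\<close>. At a maximum \<open>(x\<^sub>0,t\<^sub>0)\<close> with \<open>t\<^sub>0 > 0\<close>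
  the time derivative of \<open>t H\<close> is nonnegative, and \<open>x\<^sub>0\<close> maximises \<open>H(\<cdot>,t\<^sub>0)\<close>, so
  \<open>\<Delta>(uH) \<le> \<Delta>u \<cdot> H\<close> there. Together with \<open>CD\<psi>(n,-K)\<close> this yields
  \<open>\<partial>\<^sub>tH \<le> 2(1-\<alpha>)(K\<Gamma>\<^sup>\<psi>u - (\<Delta>\<^sup>\<psi>u)\<^sup>2/n)\<close>. Since \<open>\<Gamma>\<^sup>\<psi>u \<ge> 0\<close> by concavity of \<open>\<psi>\<close> and
  \<open>\<Delta>\<^sup>\<psi>u = -(H + \<alpha>\<Gamma>\<^sup>\<psi>u)\<close>, the Riccati-type inequality \<open>0 \<le> H + t\<^sub>0\<partial>\<^sub>tH\<close> forces
  \<open>t\<^sub>0H \<le> n/(2(1-\<alpha>)) + t\<^sub>0Kn/(2\<alpha>)\<close>.\<close>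

lemma lap_linear:
  fixes E :: "'v::finite \<Rightarrow> 'v \<Rightarrow> bool"
  shows "lap E w mu (\<lambda>y. a * g y + b * h y) x = a * lap E w mu g x + b * lap E w mu h x"
proof -
  have "(\<Sum>y\<in>{y. E x y}. w x y * (a * g y + b * h y - (a * g x + b * h x)))
     = a * (\<Sum>y\<in>{y. E x y}. w x y * (g y - g x)) + b * (\<Sum>y\<in>{y. E x y}. w x y * (h y - h x))"
    by (simp add: sum.distrib[symmetric] sum_distrib_left algebra_simps)
  then show ?thesis unfolding lap_def by (simp add: algebra_simps)
qed

lemma lap_mult_le_at_max:
  fixes E :: "'v::finite \<Rightarrow> 'v \<Rightarrow> bool"
  assumes "\<forall>y. f y \<ge> 0" "mu x > 0" "\<forall>y. E x y \<longrightarrow> w x y > 0" "\<forall>y. h y \<le> h x"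
  shows "lap E w mu (\<lambda>y. f y * h y) x \<le> lap E w mu f x * h x"
proof -
  have "(\<Sum>y\<in>{y. E x y}. w x y * f y * (h y - h x)) \<le> 0"
    using assms by (intro sum_nonpos) (auto intro!: mult_nonneg_nonpos simp: less_imp_le)
  moreover have "lap E w mu (\<lambda>y. f y * h y) x - lap E w mu f x * h x
     = (1 / mu x) * (\<Sum>y\<in>{y. E x y}. w x y * f y * (h y - h x))"
    unfolding lap_def
    by (simp add: sum_distrib_left sum_distrib_right sum_subtractf[symmetric] algebra_simps)
  ultimately show ?thesis
    using assms(2) by (smt (verit) mult_nonneg_nonpos zero_le_divide_1_iff)
qed

lemma lap_has_real_derivative:
  fixes E :: "'v::finite \<Rightarrow> 'v \<Rightarrow> bool"
  assumes "\<forall>y. (g y has_real_derivative g' y) (at t within S)"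
  shows "((\<lambda>s. lap E w mu (\<lambda>y. g y s) x) has_real_derivative lap E w mu g' x) (at t within S)"
  unfolding lap_def using assms by (intro DERIV_cmult DERIV_sum DERIV_diff) auto

lemma psi_lap_has_real_derivative:
  fixes E :: "'v::finite \<Rightarrow> 'v \<Rightarrow> bool"
  assumes g: "\<forall>y. (g y has_real_derivative g' y) (at t within S)" and pos: "\<forall>y. g y t > 0"
    and psi_diff: "\<forall>s>0. psi differentiable (at s)"
  shows "((\<lambda>s. psi_lap E w mu psi (\<lambda>y. g y s) x) has_real_derivative
     lap E w mu (\<lambda>y. deriv psi (g y t / g x t) * (g y t / g x t) * (g' y / g y t - g' x / g x t)) x)
     (at t within S)"
proof -
  define D where "D y = deriv psi (g y t / g x t) * (g y t / g x t) * (g' y / g y t - g' x / g x t)" for y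
  have "((\<lambda>s. psi (g y s / g x s)) has_real_derivative D y) (at t within S)" for y
  proof -
    have "(psi has_real_derivative deriv psi (g y t / g x t)) (at (g y t / g x t))"
      using psi_diff pos by (simp add: DERIV_deriv_iff_real_differentiable)
    moreover have "((\<lambda>s. g y s / g x s) has_real_derivative (g y t / g x t) * (g' y / g y t - g' x / g x t))
        (at t within S)"
      using g pos[rule_format, of x] pos[rule_format, of y]
      by (auto intro!: derivative_eq_intros simp: field_simps power2_eq_square)
    ultimately show ?thesis
      unfolding D_def mult.assoc by (rule DERIV_chain2)
  qed
  then have "((\<lambda>s. lap E w mu (\<lambda>y. psi (g y s / g x s)) x) has_real_derivative lap E w mu D x)
      (at t within S)"
    unfolding lap_def by (intro DERIV_cmult DERIV_sum DERIV_diff) blast+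
  moreover have "lap E w mu D x = lap E w mu (\<lambda>y. D y - D x) x"
    unfolding lap_def by simp
  moreover have "D x = 0" unfolding D_def by simp
  ultimately show ?thesis unfolding psi_lap_def D_def by simp
qed

lemma psi_bar_nonneg:
  assumes psi_diff: "psi differentiable (at 1)" and psi_concave: "concave_on {0<..} psi"
    and "s > 0"
  shows "psi_bar psi s \<ge> 0"
proof -
  have convex: "convex_on {0<..} (\<lambda>x. - psi x)"
    using psi_concave by (simp add: concave_on_def)
  have "(psi has_real_derivative deriv psi 1) (at 1)"
    using psi_diff by (simp add: DERIV_deriv_iff_real_differentiable)
  then have tangent: "((\<lambda>x. - psi x) has_real_derivative - deriv psi 1) (at 1 within {0<..})"
    by (rule has_field_derivative_at_within[OF DERIV_minus])
  have "- psi s - - psi 1 \<ge> - deriv psi 1 * (s - 1)"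
    using convex_on_imp_above_tangent[OF convex _ _ _ tangent] \<open>s > 0\<close>
    by (simp add: interior_open)
  then show ?thesis unfolding psi_bar_def by (simp add: algebra_simps)
qed

lemma psi_Gamma_eq:
  fixes E :: "'v::finite \<Rightarrow> 'v \<Rightarrow> bool"
  assumes "f x > 0"
  shows "psi_Gamma E w mu psi f x = deriv psi 1 * (lap E w mu f x / f x) - psi_lap E w mu psi f x"
proof -
  have "w x y * (psi_bar psi (f y / f x) - psi_bar psi (f x / f x))
     = deriv psi 1 * (w x y * (f y - f x) / f x) - w x y * (psi (f y / f x) - psi (f x / f x))" for y
    using assms by (simp add: psi_bar_def diff_divide_distrib algebra_simps)
  then have "(\<Sum>y\<in>{y. E x y}. w x y * (psi_bar psi (f y / f x) - psi_bar psi (f x / f x)))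
    = deriv psi 1 * ((\<Sum>y\<in>{y. E x y}. w x y * (f y - f x)) / f x)
      - (\<Sum>y\<in>{y. E x y}. w x y * (psi (f y / f x) - psi (f x / f x)))"
    by (simp only: sum_subtractf sum_distrib_left[symmetric] sum_divide_distrib[symmetric])
  then show ?thesis
    unfolding psi_Gamma_def psi_lap_def lap_def by (simp add: right_diff_distrib)
qed

lemma psi_Gamma_nonneg:
  fixes E :: "'v::finite \<Rightarrow> 'v \<Rightarrow> bool"
  assumes "\<forall>y. f y > 0" "mu x > 0" "\<forall>y. E x y \<longrightarrow> w x y > 0"
    and "psi differentiable (at 1)" "concave_on {0<..} psi"
  shows "psi_Gamma E w mu psi f x \<ge> 0"
proof -
  have "psi_bar psi (f x / f x) = 0"
    using assms(1)[rule_format, of x] by (simp add: psi_bar_def)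
  moreover have "psi_bar psi (f y / f x) \<ge> 0" for y
    using assms by (intro psi_bar_nonneg) auto
  ultimately have "(\<Sum>y\<in>{y. E x y}. w x y * (psi_bar psi (f y / f x) - psi_bar psi (f x / f x))) \<ge> 0"
    using assms(3) by (intro sum_nonneg) (simp add: less_imp_le)
  then show ?thesis
    unfolding psi_Gamma_def psi_lap_def lap_def using assms(2) by simp
qed

definition li_yau :: "('v \<Rightarrow> 'v \<Rightarrow> bool) \<Rightarrow> ('v \<Rightarrow> 'v \<Rightarrow> real) \<Rightarrow> ('v \<Rightarrow> real)
    \<Rightarrow> (real \<Rightarrow> real) \<Rightarrow> real \<Rightarrow> ('v \<Rightarrow> real) \<Rightarrow> 'v \<Rightarrow> real" where
  "li_yau E w mu psi \<alpha> f x =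
     (1 - \<alpha>) * psi_Gamma E w mu psi f x - deriv psi 1 * lap E w mu f x / f x"

text \<open>The time derivative of \<open>li_yau\<close> along the heat flow, where \<open>\<partial>\<^sub>t u\<close> has been
  replaced by \<open>\<Delta>u\<close>.\<close>
definition li_yau_dt :: "('v \<Rightarrow> 'v \<Rightarrow> bool) \<Rightarrow> ('v \<Rightarrow> 'v \<Rightarrow> real) \<Rightarrow> ('v \<Rightarrow> real)
    \<Rightarrow> (real \<Rightarrow> real) \<Rightarrow> real \<Rightarrow> ('v \<Rightarrow> real) \<Rightarrow> 'v \<Rightarrow> real" where
  "li_yau_dt E w mu psi \<alpha> f x =
     - (1 - \<alpha>) * psi_Omega E w mu psi f x
     - \<alpha> * deriv psi 1 * (lap E w mu (lap E w mu f) x / f x - (lap E w mu f x / f x)\<^sup>2)"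

lemma li_yau_eq:
  fixes E :: "'v::finite \<Rightarrow> 'v \<Rightarrow> bool"
  assumes "f x > 0"
  shows "li_yau E w mu psi \<alpha> f x
    = - (1 - \<alpha>) * psi_lap E w mu psi f x - \<alpha> * deriv psi 1 * (lap E w mu f x / f x)"
  unfolding li_yau_def psi_Gamma_eq[where f = f and x = x, OF assms]
  using assms by (simp add: field_simps)

lemma li_yau_has_real_derivative:
  fixes E :: "'v::finite \<Rightarrow> 'v \<Rightarrow> bool"
  assumes heat: "\<forall>y. (u y has_real_derivative lap E w mu (\<lambda>z. u z t) y) (at t within S)"
    and pos: "\<forall>s\<in>S. \<forall>y. u y s > 0" and "t \<in> S"
    and psi_diff: "\<forall>s>0. psi differentiable (at s)"
  shows "((\<lambda>s. li_yau E w mu psi \<alpha> (\<lambda>y. u y s) x) has_real_derivative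
      li_yau_dt E w mu psi \<alpha> (\<lambda>y. u y t) x) (at t within S)"
proof -
  define L where "L s = lap E w mu (\<lambda>y. u y s) x" for s
  define LL where "LL = lap E w mu (lap E w mu (\<lambda>y. u y t)) x"
  have ut: "u x t > 0" using pos \<open>t \<in> S\<close> by blast
  have "(L has_real_derivative LL) (at t within S)"
    unfolding L_def LL_def using heat by (rule lap_has_real_derivative)
  then have "((\<lambda>s. L s / u x s) has_real_derivative (LL * u x t - L t * L t) / (u x t * u x t))
      (at t within S)"
    using heat ut unfolding L_def by (intro DERIV_divide) auto
  moreover have "(LL * u x t - L t * L t) / (u x t * u x t) = LL / u x t - (L t / u x t)\<^sup>2"
    using ut by (simp add: field_simps power2_eq_square)
  ultimately have "((\<lambda>s. L s / u x s) has_real_derivative LL / u x t - (L t / u x t)\<^sup>2)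
      (at t within S)"
    by simp
  moreover have "((\<lambda>s. psi_lap E w mu psi (\<lambda>y. u y s) x) has_real_derivative
      psi_Omega E w mu psi (\<lambda>y. u y t) x) (at t within S)"
    using psi_lap_has_real_derivative[OF heat _ psi_diff] pos \<open>t \<in> S\<close>
    unfolding psi_Omega_def by blast
  ultimately have "((\<lambda>s. - (1 - \<alpha>) * psi_lap E w mu psi (\<lambda>y. u y s) x
        - \<alpha> * deriv psi 1 * (L s / u x s)) has_real_derivative
      li_yau_dt E w mu psi \<alpha> (\<lambda>y. u y t) x) (at t within S)"
    unfolding li_yau_dt_def LL_def L_def by (intro DERIV_diff DERIV_cmult)
  then show ?thesis
    by (rule has_field_derivative_transform_within[where d = 1])
      (use \<open>t \<in> S\<close> pos in \<open>auto simp: li_yau_eq L_def\<close>)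
qed

lemma CD_psi_Omega_lower_bound:
  fixes E :: "'v::finite \<Rightarrow> 'v \<Rightarrow> bool"
  assumes CD: "CD_psi E w mu psi n (- K)" and pos: "\<forall>y. f y > 0"
  shows "psi_Omega E w mu psi f x
      - (lap E w mu (\<lambda>y. f y * psi_lap E w mu psi f y) x - lap E w mu f x * psi_lap E w mu psi f x) / f x
    \<ge> 2 * ((psi_lap E w mu psi f x)\<^sup>2 / n - K * psi_Gamma E w mu psi f x)"
proof -
  have "psi_Gamma2 E w mu psi f x \<ge> (psi_lap E w mu psi f x)\<^sup>2 / n - K * psi_Gamma E w mu psi f x"
    using CD pos unfolding CD_psi_def by auto
  then show ?thesis
    unfolding psi_Gamma2_def by (simp add: le_divide_eq_numeral1 diff_divide_distrib algebra_simps)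
qed

lemma li_yau_max_principle:
  fixes E :: "'v::finite \<Rightarrow> 'v \<Rightarrow> bool"
  assumes pos: "\<forall>y. f y > 0" and mu: "mu x > 0" and w: "\<forall>y. E x y \<longrightarrow> w x y > 0"
    and max: "\<forall>y. li_yau E w mu psi \<alpha> f y \<le> li_yau E w mu psi \<alpha> f x"
  shows "- \<alpha> * deriv psi 1 * (lap E w mu (lap E w mu f) x / f x - (lap E w mu f x / f x)\<^sup>2)
    \<le> (1 - \<alpha>) * ((lap E w mu (\<lambda>y. f y * psi_lap E w mu psi f y) x
                     - lap E w mu f x * psi_lap E w mu psi f x) / f x)"
proof -
  define c where "c = deriv psi 1"
  define A where "A = psi_lap E w mu psi f x"
  define L where "L = lap E w mu f x"
  define LL where "LL = lap E w mu (lap E w mu f) x"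
  define LA where "LA = lap E w mu (\<lambda>y. f y * psi_lap E w mu psi f y) x"
  have fx: "f x > 0" using pos by blast
  have "(\<lambda>y. f y * li_yau E w mu psi \<alpha> f y)
      = (\<lambda>y. (- (1 - \<alpha>)) * (f y * psi_lap E w mu psi f y) + (- (\<alpha> * c)) * lap E w mu f y)"
  proof
    fix y
    have "f y > 0" using pos by blast
    then show "f y * li_yau E w mu psi \<alpha> f y
      = - (1 - \<alpha>) * (f y * psi_lap E w mu psi f y) + - (\<alpha> * c) * lap E w mu f y"
      by (simp add: li_yau_eq c_def field_simps)
  qed
  then have "lap E w mu (\<lambda>y. f y * li_yau E w mu psi \<alpha> f y) x = - (1 - \<alpha>) * LA - \<alpha> * c * LL"
    by (simp only: lap_linear) (simp add: LA_def LL_def)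
  moreover have "lap E w mu (\<lambda>y. f y * li_yau E w mu psi \<alpha> f y) x \<le> L * li_yau E w mu psi \<alpha> f x"
    unfolding L_def using pos mu w max by (intro lap_mult_le_at_max) (auto simp: less_imp_le)
  moreover have "li_yau E w mu psi \<alpha> f x = - (1 - \<alpha>) * A - \<alpha> * c * (L / f x)"
    using fx by (simp add: li_yau_eq A_def c_def L_def)
  ultimately have "- (1 - \<alpha>) * LA - \<alpha> * c * LL \<le> L * (- (1 - \<alpha>) * A - \<alpha> * c * (L / f x))"
    by simp
  from divide_right_mono[OF this, of "f x"]
  show ?thesis
    using fx unfolding c_def[symmetric] A_def[symmetric] L_def[symmetric] LL_def[symmetric] LA_def[symmetric]
    by (simp add: field_simps power2_eq_square)
qed

lemma li_yau_dt_le_at_max: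
  fixes E :: "'v::finite \<Rightarrow> 'v \<Rightarrow> bool"
  assumes pos: "\<forall>y. f y > 0" and mu: "mu x > 0" and w: "\<forall>y. E x y \<longrightarrow> w x y > 0"
    and CD: "CD_psi E w mu psi n (- K)" and "\<alpha> \<le> 1"
    and max: "\<forall>y. li_yau E w mu psi \<alpha> f y \<le> li_yau E w mu psi \<alpha> f x"
  shows "li_yau_dt E w mu psi \<alpha> f x
    \<le> 2 * (1 - \<alpha>) * (K * psi_Gamma E w mu psi f x - (psi_lap E w mu psi f x)\<^sup>2 / n)"
proof -
  define c where "c = deriv psi 1"
  define A where "A = psi_lap E w mu psi f x"
  define G where "G = psi_Gamma E w mu psi f x"
  define L where "L = lap E w mu f x"
  define LL where "LL = lap E w mu (lap E w mu f) x"
  define D where "D = (lap E w mu (\<lambda>y. f y * psi_lap E w mu psi f y) x - L * A) / f x"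
  define Om where "Om = psi_Omega E w mu psi f x"
  have max_principle: "- \<alpha> * c * (LL / f x - (L / f x)\<^sup>2) \<le> (1 - \<alpha>) * D"
    using li_yau_max_principle[OF pos mu w max] unfolding D_def c_def LL_def L_def A_def .
  have "li_yau_dt E w mu psi \<alpha> f x = - (1 - \<alpha>) * Om - \<alpha> * c * (LL / f x - (L / f x)\<^sup>2)"
    unfolding li_yau_dt_def Om_def c_def LL_def L_def by simp
  also have "\<dots> \<le> - (1 - \<alpha>) * (Om - D)"
    using max_principle by (simp add: algebra_simps)
  also have "\<dots> \<le> - (1 - \<alpha>) * (2 * (A\<^sup>2 / n - K * G))"
    using CD_psi_Omega_lower_bound[OF CD pos, of x] \<open>\<alpha> \<le> 1\<close>
    unfolding Om_def D_def L_def A_def G_def by (intro mult_left_mono_neg) auto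
  also have "\<dots> = 2 * (1 - \<alpha>) * (K * G - A\<^sup>2 / n)"
    by (simp add: algebra_simps del: times_divide_eq_right times_divide_eq_left)
  finally show ?thesis
    unfolding A_def G_def .
qed

lemma riccati_bound:
  fixes H G Q t n K \<alpha> :: real
  assumes incr: "0 \<le> H + t * Q" and Q: "Q \<le> 2 * (1 - \<alpha>) * (K * G - (H + \<alpha> * G)\<^sup>2 / n)"
    and "G \<ge> 0" "t > 0" "0 < \<alpha>" "\<alpha> < 1" "n > 0" "K > 0"
  shows "t * H \<le> n / (2 * (1 - \<alpha>)) + t * (K * n / (2 * \<alpha>))"
proof (cases "H \<le> K * n / (2 * \<alpha>)")
  case True
  then have "t * H \<le> t * (K * n / (2 * \<alpha>))"
    using \<open>t > 0\<close> by (intro mult_left_mono) auto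
  moreover have "n / (2 * (1 - \<alpha>)) > 0" using assms by simp
  ultimately show ?thesis by linarith
next
  case False
  then have "K * n < 2 * \<alpha> * H" using assms by (simp add: field_simps)
  moreover have "K * n > 0" using assms by simp
  ultimately have "\<alpha> * H > 0" by linarith
  then have "H > 0" using \<open>\<alpha> > 0\<close> by (simp add: zero_less_mult_iff)
  have "K - 2 * \<alpha> * H / n < 0"
    using \<open>K * n < 2 * \<alpha> * H\<close> \<open>n > 0\<close> by (simp add: field_simps)
  have "(H + \<alpha> * G)\<^sup>2 = H\<^sup>2 + 2 * \<alpha> * H * G + (\<alpha> * G)\<^sup>2"
    by (simp add: power2_eq_square algebra_simps)
  then have "(H + \<alpha> * G)\<^sup>2 \<ge> H\<^sup>2 + 2 * \<alpha> * H * G"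
    using zero_le_power2[of "\<alpha> * G"] by linarith
  then have "(H\<^sup>2 + 2 * \<alpha> * H * G) / n \<le> (H + \<alpha> * G)\<^sup>2 / n"
    using \<open>n > 0\<close> by (simp add: divide_right_mono)
  then have "K * G - (H + \<alpha> * G)\<^sup>2 / n \<le> G * (K - 2 * \<alpha> * H / n) - H\<^sup>2 / n"
    by (simp add: algebra_simps add_divide_distrib)
  also have "\<dots> \<le> - H\<^sup>2 / n"
    using \<open>G \<ge> 0\<close> \<open>K - 2 * \<alpha> * H / n < 0\<close> by (simp add: mult_nonneg_nonpos)
  finally have "2 * (1 - \<alpha>) * (K * G - (H + \<alpha> * G)\<^sup>2 / n) \<le> 2 * (1 - \<alpha>) * (- H\<^sup>2 / n)"
    using \<open>\<alpha> < 1\<close> by (intro mult_left_mono) auto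
  then have "t * Q \<le> t * (2 * (1 - \<alpha>) * (- H\<^sup>2 / n))"
    using Q \<open>t > 0\<close> by (intro mult_left_mono) auto
  moreover have "H + t * (2 * (1 - \<alpha>) * (- H\<^sup>2 / n)) = H * (1 - 2 * (1 - \<alpha>) * (t * H) / n)"
    using \<open>n > 0\<close> by (simp add: power2_eq_square field_simps)
  ultimately have "0 \<le> H * (1 - 2 * (1 - \<alpha>) * (t * H) / n)"
    using incr by linarith
  then have "2 * (1 - \<alpha>) * (t * H) / n \<le> 1"
    using \<open>H > 0\<close> by (simp add: zero_le_mult_iff)
  then have "t * H \<le> n / (2 * (1 - \<alpha>))"
    using assms by (simp add: field_simps)
  moreover have "t * (K * n / (2 * \<alpha>)) > 0" using assms by simp
  ultimately show ?thesis by linarith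
qed

lemma li_yau_bound_at_max:
  fixes E :: "'v::finite \<Rightarrow> 'v \<Rightarrow> bool"
  assumes pos: "\<forall>y. f y > 0" and mu: "mu x > 0" and w: "\<forall>y. E x y \<longrightarrow> w x y > 0"
    and CD: "CD_psi E w mu psi n (- K)" and "n > 0" "K > 0" "0 < \<alpha>" "\<alpha> < 1"
    and psi_diff: "psi differentiable (at 1)" and psi_concave: "concave_on {0<..} psi"
    and max: "\<forall>y. li_yau E w mu psi \<alpha> f y \<le> li_yau E w mu psi \<alpha> f x"
    and "t > 0" and incr: "0 \<le> li_yau E w mu psi \<alpha> f x + t * li_yau_dt E w mu psi \<alpha> f x"
  shows "t * li_yau E w mu psi \<alpha> f x \<le> n / (2 * (1 - \<alpha>)) + t * (K * n / (2 * \<alpha>))"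
proof -
  define G where "G = psi_Gamma E w mu psi f x"
  have fx: "f x > 0" using pos by blast
  have "psi_lap E w mu psi f x = - (li_yau E w mu psi \<alpha> f x + \<alpha> * G)"
    unfolding li_yau_def G_def psi_Gamma_eq[where f = f and x = x, OF fx]
    using fx by (simp add: field_simps)
  then have sq: "(psi_lap E w mu psi f x)\<^sup>2 = (li_yau E w mu psi \<alpha> f x + \<alpha> * G)\<^sup>2"
    by (simp only: power2_minus)
  have "li_yau_dt E w mu psi \<alpha> f x \<le> 2 * (1 - \<alpha>) * (K * G - (psi_lap E w mu psi f x)\<^sup>2 / n)"
    using li_yau_dt_le_at_max[OF pos mu w CD _ max] \<open>\<alpha> < 1\<close> unfolding G_def by simp
  then have "li_yau_dt E w mu psi \<alpha> f x
      \<le> 2 * (1 - \<alpha>) * (K * G - (li_yau E w mu psi \<alpha> f x + \<alpha> * G)\<^sup>2 / n)"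
    unfolding sq .
  moreover have "G \<ge> 0"
    unfolding G_def using pos mu w psi_diff psi_concave by (rule psi_Gamma_nonneg)
  ultimately show ?thesis
    using riccati_bound[OF incr] assms by simp
qed

lemma finite_family_attains_max:
  fixes F :: "'a::finite \<Rightarrow> real \<Rightarrow> real"
  assumes "compact S" "S \<noteq> {}" "\<And>y. continuous_on S (F y)"
  obtains x0 t0 where "t0 \<in> S" "\<And>y r. r \<in> S \<Longrightarrow> F y r \<le> F x0 t0"
proof -
  obtain ty where ty: "\<And>y. ty y \<in> S" "\<And>y r. r \<in> S \<Longrightarrow> F y r \<le> F y (ty y)"
    using continuous_attains_sup[OF assms(1,2,3)] by metis
  have "Max (range (\<lambda>y. F y (ty y))) \<in> range (\<lambda>y. F y (ty y))"
    by (intro Max_in) auto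
  then obtain x0 where "F x0 (ty x0) = Max (range (\<lambda>y. F y (ty y)))"
    by (metis rangeE)
  then have "F y (ty y) \<le> F x0 (ty x0)" for y by simp
  with ty show thesis by (meson order_trans that)
qed

lemma has_real_derivative_at_of_within_atLeast:
  assumes "(f has_real_derivative D) (at t within {a..})" "a < t"
  shows "(f has_real_derivative D) (at t)"
proof -
  have "(f has_real_derivative D) (at t within {a<..})"
    using assms(1) by (rule has_field_derivative_subset) auto
  moreover have "at t within {a<..} = at t" using assms(2) by (intro at_within_open) auto
  ultimately show ?thesis by simp
qed

lemma has_real_derivative_nonneg_at_left_max:
  assumes "(f has_real_derivative D) (at t within {a..})" "a < t"
    and max: "\<And>r. r \<in> {a..t} \<Longrightarrow> f r \<le> f t"
  shows "D \<ge> 0"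
proof (rule ccontr)
  assume "\<not> D \<ge> 0"
  then obtain d where "d > 0" and dec: "\<And>h. 0 < h \<Longrightarrow> h < d \<Longrightarrow> f t < f (t - h)"
    using DERIV_neg_dec_left[OF has_real_derivative_at_of_within_atLeast[OF assms(1,2)]] by auto
  define h where "h = min (d / 2) (t - a)"
  have "0 < h" "h < d" "h \<le> t - a" using \<open>d > 0\<close> \<open>a < t\<close> unfolding h_def by auto
  then show False using dec[of h] max[of "t - h"] by auto
qed

lemma li_yau_time_weighted_bound:
  fixes E :: "'v::finite \<Rightarrow> 'v \<Rightarrow> bool"
  assumes G: "weighted_graph E w mu"
    and n: "n > 0" and K: "K > 0" and \<alpha>: "0 < \<alpha>" "\<alpha> < 1"
    and psi_diff: "\<forall>s>0. psi differentiable (at s)" and psi_concave: "concave_on {0<..} psi"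
    and CD: "CD_psi E w mu psi n (- K)"
    and heat: "pos_heat_solution E w mu UNIV u"
    and "T \<ge> 0" "r \<in> {0..T}"
  shows "r * li_yau E w mu psi \<alpha> (\<lambda>z. u z r) y \<le> n / (2 * (1 - \<alpha>)) + T * (K * n / (2 * \<alpha>))"
proof -
  have mu: "\<And>x. mu x > 0" and w: "\<And>x. \<forall>y. E x y \<longrightarrow> w x y > 0"
    using G unfolding weighted_graph_def by auto
  have pos: "\<forall>s\<in>{0..}. \<forall>y. u y s > 0"
    using heat unfolding pos_heat_solution_def by auto
  define F where "F y t = t * li_yau E w mu psi \<alpha> (\<lambda>z. u z t) y" for y t
  have dF: "(F y has_real_derivative
      li_yau E w mu psi \<alpha> (\<lambda>z. u z t) y + t * li_yau_dt E w mu psi \<alpha> (\<lambda>z. u z t) y)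
      (at t within {0..})" if "t \<ge> 0" for y t
  proof -
    have "\<forall>y. (u y has_real_derivative lap E w mu (\<lambda>z. u z t) y) (at t within {0..})"
      using heat that unfolding pos_heat_solution_def by blast
    from li_yau_has_real_derivative[OF this pos _ psi_diff]
    show ?thesis
      unfolding F_def using that by (auto intro!: derivative_eq_intros)
  qed
  have cont: "continuous_on {0..T} (F y)" for y
    unfolding continuous_on_eq_continuous_within
    using DERIV_continuous[OF dF] continuous_within_subset[of _ "{0..}" "F y" "{0..T}"] by auto
  obtain x0 t0 where "t0 \<in> {0..T}" and max: "\<And>y r. r \<in> {0..T} \<Longrightarrow> F y r \<le> F x0 t0"
    by (rule finite_family_attains_max[of "{0..T}" F, OF _ _ cont]) (use \<open>T \<ge> 0\<close> in auto)
  have "F x0 t0 \<le> n / (2 * (1 - \<alpha>)) + t0 * (K * n / (2 * \<alpha>))"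
  proof (cases "t0 = 0")
    case True
    then show ?thesis using n \<alpha> by (simp add: F_def)
  next
    case False
    then have "t0 > 0" using \<open>t0 \<in> {0..T}\<close> by simp
    have "0 \<le> li_yau E w mu psi \<alpha> (\<lambda>z. u z t0) x0 + t0 * li_yau_dt E w mu psi \<alpha> (\<lambda>z. u z t0) x0"
      using has_real_derivative_nonneg_at_left_max[OF dF \<open>t0 > 0\<close>] \<open>t0 \<in> {0..T}\<close> max by auto
    moreover have "\<forall>y. li_yau E w mu psi \<alpha> (\<lambda>z. u z t0) y \<le> li_yau E w mu psi \<alpha> (\<lambda>z. u z t0) x0"
      using max[of t0] \<open>t0 \<in> {0..T}\<close> \<open>t0 > 0\<close> unfolding F_def by simp
    moreover have "\<forall>y. u y t0 > 0" using pos \<open>t0 > 0\<close> by simp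
    ultimately show ?thesis
      unfolding F_def using psi_diff
      by (intro li_yau_bound_at_max[OF _ mu w CD n K \<alpha> _ psi_concave _ \<open>t0 > 0\<close>]) auto
  qed
  also have "\<dots> \<le> n / (2 * (1 - \<alpha>)) + T * (K * n / (2 * \<alpha>))"
    using \<open>t0 \<in> {0..T}\<close> n K \<alpha> by (intro add_left_mono mult_right_mono) auto
  finally show ?thesis
    using max[OF \<open>r \<in> {0..T}\<close>, of y] unfolding F_def by simp
qed

theorem mainTheorem4:
  fixes E :: "'v::finite \<Rightarrow> 'v \<Rightarrow> bool" and w :: "'v \<Rightarrow> 'v \<Rightarrow> real" and mu :: "'v \<Rightarrow> real"
    and psi :: "real \<Rightarrow> real" and u :: "'v \<Rightarrow> real \<Rightarrow> real"
    and n K \<alpha> :: real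
  assumes G: "weighted_graph E w mu"
    and n_pos: "n > 0" and K_pos: "K > 0"
    and psi_diff: "\<forall>s>0. psi differentiable (at s)"
    and psi_C1: "continuous_on {0<..} (deriv psi)"
    and psi_concave: "concave_on {0<..} psi"
    and CD: "CD_psi E w mu psi n (- K)"
    and heat: "pos_heat_solution E w mu UNIV u"
    and \<alpha>: "0 < \<alpha>" "\<alpha> < 1"
  shows "\<forall>x. \<forall>t>0.
     (1 - \<alpha>) * psi_Gamma E w mu psi (\<lambda>y. u y t) x - deriv psi 1 * deriv (u x) t / u x t
       \<le> n / (2 * (1 - \<alpha>) * t) + K * n / \<alpha>"
proof (intro allI impI)
  fix x and t :: real
  assume "t > 0"
  have "t * li_yau E w mu psi \<alpha> (\<lambda>y. u y t) x \<le> n / (2 * (1 - \<alpha>)) + t * (K * n / (2 * \<alpha>))"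
    using li_yau_time_weighted_bound[OF G n_pos K_pos \<alpha> psi_diff psi_concave CD heat] \<open>t > 0\<close>
    by simp
  then have "li_yau E w mu psi \<alpha> (\<lambda>y. u y t) x
      \<le> (n / (2 * (1 - \<alpha>)) + t * (K * n / (2 * \<alpha>))) / t"
    using \<open>t > 0\<close> by (simp add: pos_le_divide_eq mult.commute)
  also have "\<dots> = n / (2 * (1 - \<alpha>) * t) + K * n / (2 * \<alpha>)"
    using \<open>t > 0\<close> by (simp add: add_divide_distrib)
  finally have bound: "li_yau E w mu psi \<alpha> (\<lambda>y. u y t) x \<le> n / (2 * (1 - \<alpha>) * t) + K * n / (2 * \<alpha>)" .
  have "(u x has_real_derivative lap E w mu (\<lambda>y. u y t) x) (at t)"
    using heat \<open>t > 0\<close> unfolding pos_heat_solution_def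
    by (intro has_real_derivative_at_of_within_atLeast[where a = 0]) auto
  then have "(1 - \<alpha>) * psi_Gamma E w mu psi (\<lambda>y. u y t) x - deriv psi 1 * deriv (u x) t / u x t
      = li_yau E w mu psi \<alpha> (\<lambda>y. u y t) x"
    unfolding li_yau_def by (simp add: DERIV_imp_deriv)
  moreover have "K * n / (2 * \<alpha>) \<le> K * n / \<alpha>"
    using K_pos n_pos \<alpha> by (simp add: frac_le)
  ultimately show "(1 - \<alpha>) * psi_Gamma E w mu psi (\<lambda>y. u y t) x - deriv psi 1 * deriv (u x) t / u x t
      \<le> n / (2 * (1 - \<alpha>) * t) + K * n / \<alpha>"
    using bound by linarith
qed

end
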